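(* Let $m/n\in(0,1/2)$ with $m>1$, let $u/v=\mathrm{LFP}(m/n)$, and let $k\in[0,m-2]\setminus R_{m/n}$. Then $k\in\mathcal A_{m/n}$ if and only if $\psi_{m/n}(k)\in\mathcal A_{u/v}$.
   Context: Rationals in lowest terms; $\mathrm{LFP}(h/k)$ is the element immediately preceding $h/k$ in the increasing list of rationals in $[0,1/2]$ with denominator at most $k$. $+_n$ is addition mod $n$ on $\mathbb Z_n=\{0,\dots,n-1\}$; $\mathcal O_{m/n}[r,s]=\{r+_njm\colon 0\le j\le K\}$ with $K\ge0$ least such that $r+_nKm=s$; $[a,b]=\{a,\dots,b\}$. An integer $k\in[0,m-1]$ is $m/n$-admissible if $[k+1,m-1]\cap\mathcal O_{m/n}[k,0]=\emptyset$; $\mathcal A_{m/n}$ is the set of $m/n$-admissible integers (and similarly $\mathcal A_{u/v}\subseteq[0,u-1]$). $R_{m/n}=\mathcal O_{m/n}[m,n-1]$, and $\psi_{m/n}\colon\mathbb Z_n\to\mathbb Z_v$ is $\psi_{m/n}(k)=k-\#(R_{m/n}\cap[0,k])$. *)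

theory Defs
  imports Main
begin

definition orbit :: "nat \<Rightarrow> nat \<Rightarrow> nat \<Rightarrow> nat \<Rightarrow> nat set" where
  "orbit m n r s =
     (let K = (LEAST K. (r + K * m) mod n = s) in {(r + j * m) mod n | j. j \<le> K})"

definition admissible :: "nat \<Rightarrow> nat \<Rightarrow> nat \<Rightarrow> bool" where
  "admissible m n k \<longleftrightarrow> k < m \<and> {k+1..<m} \<inter> orbit m n k 0 = {}"

definition Rset :: "nat \<Rightarrow> nat \<Rightarrow> nat set" where
  "Rset m n = orbit m n m (n - 1)"

definition psi :: "nat \<Rightarrow> nat \<Rightarrow> nat \<Rightarrow> nat" where
  "psi m n k = k - card (Rset m n \<inter> {0..k})"

text \<open>u/v (lowest terms) is the element immediately preceding m/n in the increasing list
  of rationals in [0,1/2] with denominator at most n.\<close>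
definition is_LFP :: "nat \<Rightarrow> nat \<Rightarrow> nat \<Rightarrow> nat \<Rightarrow> bool" where
  "is_LFP m n u v \<longleftrightarrow> coprime u v \<and> 0 < v \<and> v \<le> n \<and> 2 * u \<le> v \<and> u * n < m * v \<and>
     (\<forall>h d. 0 < d \<and> d \<le> n \<and> 2 * h \<le> d \<and> h * n < m * d \<longrightarrow> h * v \<le> u * d)"

end

theory Submission
  imports Defs
begin

text \<open>Since u/v is the left Farey neighbour of m/n, m v - u n = 1. Put c i = -i m mod n and
  d i = -i u mod v. Then n (d i) = v (c i) + i for i < v, so c and d order [0, v) in the same way.
  The orbit of c i under +_n m is c i, c (i - 1), ..., c 0 = 0, and R_{m/n} = c [v, n - 1]; hence the
  points outside R_{m/n} are the c i with i < v, and counting gives psi (c i) = d i. As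
  c (v - 1) = m - 1 and d (v - 1) = u, the admissibility conditions for c i and for d i correspond
  term by term.\<close>

lemma mult_add_less_mult_add_iff:
  fixes a b i j v :: nat
  assumes "i < v" and "j < v"
  shows "v * a + i < v * b + j \<longleftrightarrow> a < b \<or> (a = b \<and> i < j)"
proof
  assume less: "v * a + i < v * b + j"
  have "a \<le> b"
  proof (rule ccontr)
    assume "\<not> a \<le> b"
    then have "v * (b + 1) \<le> v * a" by (intro mult_le_mono2) simp
    then show False using less assms(2) by simp
  qed
  then show "a < b \<or> (a = b \<and> i < j)" using less by auto
next
  assume "a < b \<or> (a = b \<and> i < j)"
  then show "v * a + i < v * b + j"
  proof
    assume "a < b"
    then have "v * (a + 1) \<le> v * b" by (intro mult_le_mono2) simp
    then show ?thesis using assms(1) by simp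
  qed simp
qed

text \<open>The point of Z_n from which i steps of +_n m lead to 0.\<close>
definition neg_multiple :: "nat \<Rightarrow> nat \<Rightarrow> nat \<Rightarrow> nat" where
  "neg_multiple m n i = nat ((- int i * int m) mod int n)"

lemma int_neg_multiple:
  "0 < n \<Longrightarrow> int (neg_multiple m n i) = (- int i * int m) mod int n"
  by (simp add: neg_multiple_def)

lemma neg_multiple_less: "0 < n \<Longrightarrow> neg_multiple m n i < n"
  using int_neg_multiple[of n m i] by (metis of_nat_0_less_iff of_nat_less_iff pos_mod_bound)

lemma neg_multiple_0 [simp]: "neg_multiple m n 0 = 0"
  by (simp add: neg_multiple_def)

lemma neg_multiple_eqI:
  assumes "r < n" and "n dvd r + i * m"
  shows "neg_multiple m n i = r"
proof -
  have "int n dvd int r - (- int i * int m)"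
    using assms(2) by (metis minus_mult_left of_nat_add of_nat_dvd_iff of_nat_mult diff_minus_eq_add)
  then have "(- int i * int m) mod int n = int r"
    using assms(1) by (metis mod_eq_dvd_iff mod_pos_pos_trivial of_nat_0_le_iff of_nat_less_iff)
  then show ?thesis by (simp add: neg_multiple_def)
qed

lemma neg_multiple_add_mult:
  assumes "0 < n" and "j \<le> i"
  shows "(neg_multiple m n i + j * m) mod n = neg_multiple m n (i - j)"
proof -
  have "int ((neg_multiple m n i + j * m) mod n) = ((- int i * int m) mod int n + int j * int m) mod int n"
    using assms(1) by (simp add: zmod_int int_neg_multiple)
  also have "\<dots> = (- int i * int m + int j * int m) mod int n"
    by (simp add: mod_add_left_eq)
  also have "\<dots> = (- int (i - j) * int m) mod int n"
    using assms(2) by (simp add: algebra_simps)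
  also have "\<dots> = int (neg_multiple m n (i - j))"
    using assms(1) by (simp add: int_neg_multiple)
  finally show ?thesis by (simp only: of_nat_eq_iff)
qed

lemma inj_on_neg_multiple:
  assumes "coprime m n"
  shows "inj_on (neg_multiple m n) {..<n}"
proof (rule inj_onI)
  fix i j assume i: "i \<in> {..<n}" and j: "j \<in> {..<n}" and eq: "neg_multiple m n i = neg_multiple m n j"
  have "int n dvd (int j - int i) * int m"
    using eq i int_neg_multiple[of n m i] int_neg_multiple[of n m j]
    by (auto simp: mod_eq_dvd_iff algebra_simps)
  then have "int n dvd int j - int i"
    using assms by (simp add: coprime_dvd_mult_left_iff coprime_commute)
  then show "i = j" using i j by (simp add: mod_eq_dvd_iff[symmetric])
qed

lemma neg_multiple_image:
  assumes "coprime m n"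
  shows "neg_multiple m n ` {..<n} = {..<n}"
  using inj_on_neg_multiple[OF assms] neg_multiple_less
  by (intro endo_inj_surj) auto

lemma orbit_neg_multiple:
  assumes "coprime m n" and "j \<le> i" and "i < n"
  shows "orbit m n (neg_multiple m n i) (neg_multiple m n j) = neg_multiple m n ` {j..i}"
proof -
  let ?c = "neg_multiple m n"
  have n: "0 < n" using assms(3) by simp
  have least: "(LEAST K. (?c i + K * m) mod n = ?c j) = i - j"
  proof (rule Least_equality)
    show "(?c i + (i - j) * m) mod n = ?c j"
      using assms(2) by (simp add: neg_multiple_add_mult[OF n])
  next
    fix K assume K: "(?c i + K * m) mod n = ?c j"
    show "i - j \<le> K"
    proof (rule ccontr)
      assume "\<not> i - j \<le> K"
      then have "?c (i - K) = ?c j" "i - K \<noteq> j"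
        using K neg_multiple_add_mult[OF n, of K i m] by auto
      then show False
        using inj_onD[OF inj_on_neg_multiple[OF assms(1)]] assms by auto
    qed
  qed
  have shift: "(\<lambda>K. i - K) ` {..i - j} = {j..i}"
  proof
    show "{j..i} \<subseteq> (\<lambda>K. i - K) ` {..i - j}"
    proof
      fix x assume "x \<in> {j..i}"
      then show "x \<in> (\<lambda>K. i - K) ` {..i - j}"
        by (intro image_eqI[where x = "i - x"]) auto
    qed
  qed (use assms(2) in auto)
  have "{(?c i + K * m) mod n | K. K \<le> i - j} = (\<lambda>K. (?c i + K * m) mod n) ` {..i - j}"
    by auto
  also have "\<dots> = (\<lambda>K. ?c (i - K)) ` {..i - j}"
    using assms(2) by (intro image_cong) (auto simp: neg_multiple_add_mult[OF n])
  also have "\<dots> = ?c ` {j..i}"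
    by (simp flip: shift add: image_image)
  finally show ?thesis unfolding orbit_def least Let_def .
qed

lemma admissible_neg_multiple_iff:
  assumes "coprime m n" and "i < n"
  shows "admissible m n (neg_multiple m n i) \<longleftrightarrow>
    neg_multiple m n i < m \<and>
    (\<forall>j\<le>i. \<not> (neg_multiple m n i < neg_multiple m n j \<and> neg_multiple m n j < m))"
proof -
  have "orbit m n (neg_multiple m n i) 0 = neg_multiple m n ` {0..i}"
    using orbit_neg_multiple[OF assms(1) _ assms(2), of 0] by simp
  moreover have "{k + 1..<m} \<inter> f ` {0..i} = {} \<longleftrightarrow> (\<forall>j\<le>i. \<not> (k < f j \<and> f j < m))"
    for k and f :: "nat \<Rightarrow> nat"
    by (fastforce simp: disjoint_iff Suc_le_eq)
  ultimately show ?thesis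
    unfolding admissible_def by presburger
qed

lemma psi_eq_card_lessThan_diff_Rset:
  assumes "x \<notin> Rset m n"
  shows "psi m n x = card ({..<x} - Rset m n)"
proof -
  have "Rset m n \<inter> {0..x} = {..<x} \<inter> Rset m n"
    using assms by (auto simp: le_less)
  moreover have "card ({..<x} \<inter> Rset m n) + card ({..<x} - Rset m n) = x"
    using card_Int_Diff[of "{..<x}" "Rset m n"] by simp
  ultimately show ?thesis by (simp add: psi_def)
qed

locale farey_neighbours =
  fixes m n u v :: nat
  assumes det: "m * v = u * n + 1" and u_less_v: "u < v" and v_less_n: "v < n"
begin

abbreviation c :: "nat \<Rightarrow> nat" where "c \<equiv> neg_multiple m n"
abbreviation d :: "nat \<Rightarrow> nat" where "d \<equiv> neg_multiple u v"

lemma v_pos: "0 < v" and n_pos: "0 < n"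
  using u_less_v v_less_n by auto

lemma coprime_m_n: "coprime m n"
  by (metis det coprime_add_one_right coprime_commute coprime_mult_right_iff)

lemma coprime_u_v: "coprime u v"
  by (metis det coprime_commute coprime_mult_right_iff coprime_add_one_left)

lemma m_less_n: "m < n"
proof -
  have "m * v < u * n + n"
    using det v_less_n u_less_v by simp
  also have "\<dots> \<le> n * v"
  proof -
    have "(u + 1) * n \<le> v * n" using u_less_v by (intro mult_le_mono1) simp
    then show ?thesis by (simp add: algebra_simps)
  qed
  finally show ?thesis by simp
qed

lemma n_mult_d_eq:
  assumes "i < v"
  shows "n * d i = v * c i + i"
\<comment> \<open>Both sides lie in [0, n v) and are congruent modulo n v because m v = u n + 1.\<close>
proof -
  let ?N = "int n * int v"
  have "int (n * d i) = int n * ((- int i * int u) mod int v)"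
    using v_pos by (simp add: int_neg_multiple)
  also have "\<dots> = (- int i * int u * int n) mod ?N"
    by (simp add: mult_mod_right algebra_simps)
  finally have nd: "int (n * d i) = (- int i * int u * int n) mod ?N" .
  have "int (v * c i) = int v * ((- int i * int m) mod int n)"
    using n_pos by (simp add: int_neg_multiple)
  also have "\<dots> = (int v * (- int i * int m)) mod (int v * int n)"
    by (rule mult_mod_right)
  also have "\<dots> = (- int i * int u * int n - int i) mod ?N"
  proof -
    have "int m * int v = int u * int n + 1"
      using arg_cong[OF det, of int] by simp
    then have "int v * (- int i * int m) = - int i * int u * int n - int i"
      by (simp add: algebra_simps)
    then show ?thesis by (simp add: mult.commute)
  qed
  finally have vc: "int (v * c i) = (- int i * int u * int n - int i) mod ?N" .
  have "v * c i + i < n * v"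
  proof -
    have "c i \<le> n - 1"
      using neg_multiple_less[OF n_pos, of m i] by simp
    then have "v * c i \<le> v * (n - 1)"
      by (rule mult_le_mono2)
    moreover have "v * (n - 1) + v = n * v"
      using n_pos by (cases n) auto
    ultimately show ?thesis using assms by linarith
  qed
  then have "v * c i + i = (v * c i + i) mod (n * v)"
    by simp
  then have "int (v * c i + i) = (int (v * c i) + int i) mod ?N"
    by (metis of_nat_add of_nat_mult zmod_int)
  also have "\<dots> = int (n * d i)"
    unfolding vc nd by (simp add: mod_add_left_eq)
  finally show ?thesis by (simp only: of_nat_eq_iff)
qed

lemma c_less_iff_d_less:
  assumes "i < v" and "j < v"
  shows "c i < c j \<longleftrightarrow> d i < d j"
proof -
  have "d i < d j \<longleftrightarrow> v * c i + i < v * c j + j"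
    using n_mult_d_eq[OF assms(1)] n_mult_d_eq[OF assms(2)] n_pos by (metis mult_less_cancel1)
  also have "\<dots> \<longleftrightarrow> c i < c j \<or> (c i = c j \<and> i < j)"
    using assms by (rule mult_add_less_mult_add_iff)
  also have "\<dots> \<longleftrightarrow> c i < c j"
  proof -
    have "c i = c j \<Longrightarrow> i = j"
      using inj_onD[OF inj_on_neg_multiple[OF coprime_m_n], of i j] assms v_less_n by simp
    then show ?thesis by auto
  qed
  finally show ?thesis by simp
qed

lemma c_v_minus_1: "c (v - 1) = m - 1"
proof (rule neg_multiple_eqI)
  have "m - 1 + (v - 1) * m = u * n"
    using det v_pos by (cases m; cases v) (auto simp: algebra_simps)
  then show "n dvd m - 1 + (v - 1) * m" by simp
qed (use m_less_n in simp)

lemma c_v: "c v = n - 1"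
proof (rule neg_multiple_eqI)
  have "n - 1 + v * m = (u + 1) * n"
    using det n_pos by (cases n) (auto simp: algebra_simps)
  then show "n dvd n - 1 + v * m" by simp
qed (use n_pos in simp)

lemma c_n_minus_1: "c (n - 1) = m"
proof (rule neg_multiple_eqI)
  have "m + (n - 1) * m = n * m"
    using n_pos by (cases n) auto
  then show "n dvd m + (n - 1) * m" by simp
qed (rule m_less_n)

lemma d_v_minus_1: "d (v - 1) = u"
proof (rule neg_multiple_eqI)
  have "u + (v - 1) * u = v * u"
    using v_pos by (cases v) auto
  then show "v dvd u + (v - 1) * u" by simp
qed (rule u_less_v)

lemma Rset_eq_image: "Rset m n = c ` {v..n - 1}"
proof -
  have "Rset m n = orbit m n (c (n - 1)) (c v)"
    by (simp only: Rset_def c_v c_n_minus_1)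
  also have "\<dots> = c ` {v..n - 1}"
    using v_less_n by (intro orbit_neg_multiple coprime_m_n) auto
  finally show ?thesis .
qed

lemma lessThan_diff_Rset: "{..<n} - Rset m n = c ` {..<v}"
proof -
  have "{..<n} = {..<v} \<union> {v..n - 1}"
    using v_less_n by auto
  then have "{..<n} = c ` {..<v} \<union> c ` {v..n - 1}"
    using neg_multiple_image[OF coprime_m_n] by (metis image_Un)
  moreover have "c ` {..<v} \<inter> c ` {v..n - 1} = {}"
  proof -
    have "c ` {..<v} \<inter> c ` {v..n - 1} = c ` ({..<v} \<inter> {v..n - 1})"
      by (rule inj_on_image_Int[symmetric, OF inj_on_neg_multiple[OF coprime_m_n]])
        (use v_less_n in auto)
    then show ?thesis by auto
  qed
  ultimately show ?thesis
    unfolding Rset_eq_image by (simp add: Un_Diff Diff_triv)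
qed

lemma psi_c_eq_d:
  assumes "i < v"
  shows "psi m n (c i) = d i"
proof -
  have "c i \<in> {..<n} - Rset m n"
    using assms lessThan_diff_Rset by blast
  then have "psi m n (c i) = card ({..<c i} - Rset m n)"
    by (simp add: psi_eq_card_lessThan_diff_Rset)
  also have "{..<c i} - Rset m n = c ` {j \<in> {..<v}. c j < c i}"
    using lessThan_diff_Rset neg_multiple_less[OF n_pos, of m i] by auto
  also have "card \<dots> = card {j \<in> {..<v}. c j < c i}"
    using inj_on_neg_multiple[OF coprime_m_n] v_less_n
    by (intro card_image) (auto intro: inj_on_subset)
  also have "{j \<in> {..<v}. c j < c i} = {j \<in> {..<v}. d j < d i}"
    using c_less_iff_d_less assms by auto
  also have "card \<dots> = card (d ` {j \<in> {..<v}. d j < d i})"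
    using inj_on_neg_multiple[OF coprime_u_v]
    by (intro card_image[symmetric]) (auto intro: inj_on_subset)
  also have "d ` {j \<in> {..<v}. d j < d i} = {..<d i}"
    using neg_multiple_image[OF coprime_u_v] neg_multiple_less[OF v_pos, of u i] by auto
  finally show ?thesis by simp
qed

lemma admissible_c_iff_admissible_d:
  assumes "i < v - 1"
  shows "admissible m n (c i) \<longleftrightarrow> admissible u v (d i)"
proof -
  have below_m: "c j < m \<longleftrightarrow> d j < u" if "j \<le> i" for j
  proof -
    have "j \<noteq> v - 1" "j < n" "v - 1 < n"
      using that assms v_less_n by auto
    then have "c j \<noteq> c (v - 1)"
      using inj_on_neg_multiple[OF coprime_m_n] by (metis inj_onD lessThan_iff)
    then have "c j < m \<longleftrightarrow> c j < c (v - 1)"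
      using c_v_minus_1 by auto
    also have "\<dots> \<longleftrightarrow> d j < d (v - 1)"
      using c_less_iff_d_less that assms by simp
    finally show ?thesis using d_v_minus_1 by simp
  qed
  have "c i < c j \<longleftrightarrow> d i < d j" if "j \<le> i" for j
    using c_less_iff_d_less that assms by simp
  with below_m show ?thesis
    using assms v_less_n u_less_v
    by (simp add: admissible_neg_multiple_iff coprime_m_n coprime_u_v)
qed

lemma admissible_iff_admissible_psi:
  assumes "k < m - 1" and "k \<notin> Rset m n"
  shows "admissible m n k \<longleftrightarrow> admissible u v (psi m n k)"
proof -
  have "k \<in> {..<n} - Rset m n"
    using assms m_less_n by simp
  then obtain i where i: "i < v" and k: "k = c i"
    unfolding lessThan_diff_Rset by blast
  have "i \<noteq> v - 1"
    using assms(1) k c_v_minus_1 by auto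
  with i k show ?thesis
    by (simp add: psi_c_eq_d admissible_c_iff_admissible_d)
qed

end

lemma exists_lower_neighbour:
  fixes m n :: nat
  assumes "coprime m n" and "0 < m" and "2 * m < n"
  obtains a b where "0 < b" "b < n" "2 * a \<le> b" "m * b = a * n + 1"
proof -
  obtain x y where "m * x = n * y + gcd m n"
    using bezout_nat[of m n] assms(2) by blast
  then have "m * x = 1 + n * y"
    using assms(1) by simp
  then have "m * x mod n = 1 mod n"
    by (simp only: mod_mult_self2)
  also have "\<dots> = 1"
    using assms(2,3) by simp
  finally have "m * x mod n = 1" .
  define b where "b = x mod n"
  define a where "a = m * b div n"
  have mb: "m * b mod n = 1"
    using \<open>m * x mod n = 1\<close> unfolding b_def by (simp add: mod_mult_right_eq)
  then have det: "m * b = a * n + 1"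
    unfolding a_def by (metis div_mult_mod_eq)
  have "0 < b" using mb by (cases b) auto
  moreover have "b < n" using assms(3) unfolding b_def by simp
  moreover have "2 * a \<le> b"
  proof (rule ccontr)
    assume "\<not> 2 * a \<le> b"
    then have "(b + 1) * n \<le> 2 * a * n" by (intro mult_le_mono1) simp
    moreover have "2 * m * b \<le> (n - 1) * b" using assms(3) by (intro mult_le_mono1) simp
    moreover have "(n - 1) * b < n * b" using \<open>0 < b\<close> assms(3) by simp
    ultimately show False using det by (simp add: algebra_simps)
  qed
  ultimately show ?thesis using det that by blast
qed

lemma is_LFP_det:
  fixes m n u v :: nat
  assumes "coprime m n" and "0 < m" and "2 * m < n" and "is_LFP m n u v"
  shows "m * v = u * n + 1"
\<comment> \<open>A competitor a/b with m b - a n = 1 satisfies a/b \<le> u/v; then v = n s + b t for the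
  determinants s = u b - a v \<ge> 0 and t = m v - u n \<ge> 1, and v \<le> n forces s = 0, t = 1.\<close>
proof -
  obtain a b where b: "0 < b" "b < n" and "2 * a \<le> b" and det: "m * b = a * n + 1"
    using exists_lower_neighbour assms(1-3) by blast
  have LFP: "coprime u v" "v \<le> n" "u * n < m * v" and "a * v \<le> u * b"
    using assms(4) b \<open>2 * a \<le> b\<close> det unfolding is_LFP_def by auto
  define s where "s = int u * int b - int a * int v"
  define t where "t = int m * int v - int u * int n"
  have "0 \<le> s" "1 \<le> t"
    using \<open>a * v \<le> u * b\<close> LFP(3) unfolding s_def t_def by (simp_all flip: of_nat_mult)
  have "int m * int b - int a * int n = 1"
    using arg_cong[OF det, of int] by simp
  then have "int v = int v * (int m * int b - int a * int n)"
    by simp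
  also have "\<dots> = int n * s + int b * t"
    unfolding s_def t_def by (simp add: algebra_simps)
  finally have v_eq: "int v = int n * s + int b * t" .
  have "s = 0"
  proof (rule ccontr)
    assume "s \<noteq> 0"
    then have "int n * 1 \<le> int n * s" using \<open>0 \<le> s\<close> by (intro mult_left_mono) auto
    moreover have "int b * 1 \<le> int b * t" using \<open>1 \<le> t\<close> by (intro mult_left_mono) auto
    ultimately show False using v_eq LFP(2) b(1) by linarith
  qed
  then have "int v = int b * t" and "int u * int b = int a * int b * t"
    using v_eq unfolding s_def by (simp_all add: algebra_simps)
  then have "t dvd int u" and "t dvd int v"
    using b(1) by simp_all
  then have "t = 1"
    using LFP(1) \<open>1 \<le> t\<close> by (metis coprime_common_divisor_int coprime_int_iff abs_of_pos zero_less_one order_less_le_trans)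
  then show ?thesis
    unfolding t_def using LFP(3) by (simp flip: of_nat_mult)
qed

lemma is_LFP_farey_neighbours:
  fixes m n u v :: nat
  assumes "coprime m n" and "0 < m" and "2 * m < n" and "is_LFP m n u v"
  shows "farey_neighbours m n u v"
proof
  show det: "m * v = u * n + 1"
    using assms by (rule is_LFP_det)
  have "0 < v" "v \<le> n" "2 * u \<le> v"
    using assms(4) unfolding is_LFP_def by auto
  then show "u < v" by simp
  have "v \<noteq> n"
  proof
    assume "v = n"
    then have "n dvd 1" using det by (metis dvd_add_right_iff dvd_triv_right)
    then show False using assms(2,3) by simp
  qed
  then show "v < n" using \<open>v \<le> n\<close> by simp
qed

theorem lemma2p19:
  fixes m n u v k :: nat
  assumes "coprime m n" and "0 < m" and "2 * m < n" and "1 < m"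
    and "is_LFP m n u v"
    and "k \<le> m - 2" and "k \<notin> Rset m n"
  shows "admissible m n k \<longleftrightarrow> admissible u v (psi m n k)"
proof -
  interpret farey_neighbours m n u v
    using assms(1,2,3,5) by (rule is_LFP_farey_neighbours)
  show ?thesis
    using assms(4,6,7) by (intro admissible_iff_admissible_psi) auto
qed

end
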